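(* For a coloured integer $k_x$, let $G_{k_x}(a,b,q)=\sum a^{u}b^{v}q^{n}$, the sum running over all admissible coloured partitions (including the empty one) whose largest part $\lambda_1$ satisfies $\lambda_1\le k_x$ in the total order of coloured integers, where $n,u,v$ are the size and the two weights of the partition. Then for all integers $k \geq 1$, as formal power series, \begin{align*} G_{(2k+1)_{ab}}(a,b,q) &= (1+aq)\, G_{(2k)_{a}}(b,aq,q),\\ G_{(2k+1)_{b^2}}(a,b,q) &= (1+aq)\, G_{(2k)_{b}}(b,aq,q),\\ G_{(2k+2)_{ab}}(a,b,q) &= (1+aq)\, G_{(2k+1)_{a}}(b,aq,q),\\ G_{(2k+1)_{a^2}}(a,b,q) &= (1+aq)\, G_{(2k-1)_{b}}(b,aq,q). \end{align*}
   Context: Coloured integers: every positive integer $k$ occurs in the three colours $a$, $b$, $ab$ (written $k_a$, $k_b$, $k_{ab}$). In addition, odd positive integers occur in the colours $a^2$ and $b^2$: $k_{b^2}$ for every odd $k\ge 1$ and $k_{a^2}$ for every odd $k \geq 3$. The integer value of $k_x$ is $k$ and its colour is $x$. These coloured integers are totally ordered by $$1_{ab} < 1_a < 1_{b^2} <1_{b} <2_{ab} < 2_a <3_{a^2} < 2_{b} <3_{ab} < 3_a < 3_{b^2} <3_b <4_{ab}<4_a<5_{a^2}<4_b<5_{ab}<\cdots,$$ that is, for every odd $m\ge1$: $m_{ab}<m_a<m_{b^2}<m_b<(m+1)_{ab}<(m+1)_a<(m+2)_{a^2}<(m+1)_b<(m+2)_{ab}$. Difference conditions: for a coloured integer $\lambda$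 (the "upper" part) of colour $x$ and a coloured integer $\mu$ (the "lower" part) of colour $y$, a minimal difference $A(\lambda,\mu)$ is defined as follows, where the row is determined by the colour and the parity of the integer value of $\lambda$, and the entries are listed for $y = a, b, ab, a^2, b^2$ in this order: - $\lambda$ of colour $a$, odd: $2,2,1,2,2$; - $\lambda$ of colour $b^2$: $2,3,2,2,4$; - $\lambda$ of colour $b$, odd: $1,2,1,2,2$; - $\lambda$ of colour $ab$, even: $2,2,2,3,3$; - $\lambda$ of colour $a$, even: $2,2,2,3,3$; - $\lambda$ of colour $a^2$: $3,3,3,4,4$; - $\lambda$ of colour $b$, even: $1,2,1,1,3$; - $\lambda$ of colour $ab$, odd: $2,3,2,2,3$. An admissible coloured partition is a finite (possibly empty) sequence $\lambda_1,\dots,\lambda_s$ of coloured integers, none of which equals $1_{ab}$ or $1_{b^2}$, such that for every $1\le i<s$ the integer values satisfy $\lambda_i-\lambda_{i+1}\ge A(\lambda_i,\lambda_{i+1})$. Its size $n$ is the sum of the integer values of its parts. Its weight $u$ is the number of parts of colour $a$ or $ab$ plus twice the number of parts of colour $a^2$; its weight $v$ is the number of parts of colour $b$ or $ab$ plus twice the number of parts of colour $b^2$. *)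

theory Defs
  imports Main
begin

datatype colour = Ca | Cb | Cab | Ca2 | Cb2

type_synonym cint = "nat \<times> colour"

definition valid_cint :: "cint \<Rightarrow> bool" where
  "valid_cint c = (case c of
     (k, Ca) \<Rightarrow> k \<ge> 1
   | (k, Cb) \<Rightarrow> k \<ge> 1
   | (k, Cab) \<Rightarrow> k \<ge> 1
   | (k, Cb2) \<Rightarrow> k \<ge> 1 \<and> odd k
   | (k, Ca2) \<Rightarrow> k \<ge> 3 \<and> odd k)"

text \<open>Position of a coloured integer in the total order
  m_ab < m_a < m_b2 < m_b < (m+1)_ab < (m+1)_a < (m+2)_a2 < (m+1)_b < (m+2)_ab (m odd).\<close>
definition ckey :: "cint \<Rightarrow> nat" where
  "ckey c = (case c of
     (k, Cab) \<Rightarrow> 4 * k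
   | (k, Ca) \<Rightarrow> 4 * k + 1
   | (k, Cb2) \<Rightarrow> 4 * k + 2
   | (k, Cb) \<Rightarrow> 4 * k + 3
   | (k, Ca2) \<Rightarrow> 4 * k - 2)"

definition cle :: "cint \<Rightarrow> cint \<Rightarrow> bool" where
  "cle c d = (ckey c \<le> ckey d)"

fun row :: "nat \<times> nat \<times> nat \<times> nat \<times> nat \<Rightarrow> colour \<Rightarrow> nat" where
  "row (x1, x2, x3, x4, x5) Ca = x1"
| "row (x1, x2, x3, x4, x5) Cb = x2"
| "row (x1, x2, x3, x4, x5) Cab = x3"
| "row (x1, x2, x3, x4, x5) Ca2 = x4"
| "row (x1, x2, x3, x4, x5) Cb2 = x5"

definition mindiff :: "cint \<Rightarrow> cint \<Rightarrow> nat" where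
  "mindiff l m = row (case l of
     (k, Ca) \<Rightarrow> if odd k then (2,2,1,2,2) else (2,2,2,3,3)
   | (k, Cb2) \<Rightarrow> (2,3,2,2,4)
   | (k, Cb) \<Rightarrow> if odd k then (1,2,1,2,2) else (1,2,1,1,3)
   | (k, Cab) \<Rightarrow> if odd k then (2,3,2,2,3) else (2,2,2,3,3)
   | (k, Ca2) \<Rightarrow> (3,3,3,4,4)) (snd m)"

definition admissible :: "cint list \<Rightarrow> bool" where
  "admissible p = ((\<forall>c \<in> set p. valid_cint c \<and> c \<noteq> (1, Cab) \<and> c \<noteq> (1, Cb2)) \<and>
     (\<forall>i. Suc i < length p \<longrightarrow>
        int (fst (p ! i)) - int (fst (p ! Suc i)) \<ge> int (mindiff (p ! i) (p ! Suc i))))"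

definition psize :: "cint list \<Rightarrow> nat" where
  "psize p = (\<Sum>c\<leftarrow>p. fst c)"

definition wt_u :: "cint list \<Rightarrow> nat" where
  "wt_u p = (\<Sum>c\<leftarrow>p. (case snd c of Ca \<Rightarrow> 1 | Cab \<Rightarrow> 1 | Ca2 \<Rightarrow> 2 | _ \<Rightarrow> 0))"

definition wt_v :: "cint list \<Rightarrow> nat" where
  "wt_v p = (\<Sum>c\<leftarrow>p. (case snd c of Cb \<Rightarrow> 1 | Cab \<Rightarrow> 1 | Cb2 \<Rightarrow> 2 | _ \<Rightarrow> 0))"

definition Gcoeff :: "cint \<Rightarrow> nat \<Rightarrow> nat \<Rightarrow> nat \<Rightarrow> nat" where
  "Gcoeff K u v n = card {p. admissible p \<and> (p \<noteq> [] \<longrightarrow> cle (hd p) K)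
      \<and> psize p = n \<and> wt_u p = u \<and> wt_v p = v}"

text \<open>A formal power series in a, b, q is represented by its coefficient function
  (u, v, n) \<mapsto> [a^u b^v q^n]. subst_b_aq F is F(b, aq, q); times_1_aq F is (1+aq) F.\<close>
definition subst_b_aq :: "(nat \<Rightarrow> nat \<Rightarrow> nat \<Rightarrow> nat) \<Rightarrow> nat \<Rightarrow> nat \<Rightarrow> nat \<Rightarrow> nat" where
  "subst_b_aq F u v n = (if u \<le> n then F v u (n - u) else 0)"

definition times_1_aq :: "(nat \<Rightarrow> nat \<Rightarrow> nat \<Rightarrow> nat) \<Rightarrow> nat \<Rightarrow> nat \<Rightarrow> nat \<Rightarrow> nat" where
  "times_1_aq F u v n = F u v n + (if u \<ge> 1 \<and> n \<ge> 1 then F (u - 1) v (n - 1) else 0)"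

end

theory Submission
  imports Defs "HOL-Library.Function_Algebras"
begin

text \<open>Let \<open>G_t\<close> count the admissible partitions whose first part has position at most \<open>t\<close>
  in the total order (position \<open>ckey\<close>). Passing from \<open>G_{t-1}\<close> to \<open>G_t\<close> adds the partitions
  starting with the part \<open>c\<close> of position \<open>t\<close>, i.e. \<open>c\<close> followed by a partition whose first part may
  follow \<open>c\<close>. By the difference table the parts that may follow \<open>c\<close> form an initial segment of
  the order, except after \<open>(2j+2)_{ab}\<close>, \<open>(2j+2)_a\<close>, \<open>(2j+3)_{a^2}\<close>, where \<open>(2j+1)_{a^2}\<close> is
  missing from the segment. This gives recurrences for \<open>G_t\<close> with monomial coefficients.
  The map \<open>F \<mapsto> (1+aq) F(b,aq,q)\<close> is additive and turns multiplication by \<open>a^i b^j q^k\<close>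
  into multiplication by \<open>a^j b^i q^(k+j)\<close>, so the recurrences carry three identities from one
  block of eight positions to the next, producing the four identities of the theorem on the way.\<close>

lemma successively_iff_nth:
  "successively P xs \<longleftrightarrow> (\<forall>i. Suc i < length xs \<longrightarrow> P (xs ! i) (xs ! Suc i))"
  by (induction P xs rule: successively.induct) (auto simp: All_less_Suc2 nth_Cons split: nat.split)

definition allowed_part :: "cint \<Rightarrow> bool" where
  "allowed_part c \<longleftrightarrow> valid_cint c \<and> c \<noteq> (1, Cab) \<and> c \<noteq> (1, Cb2)"

definition may_precede :: "cint \<Rightarrow> cint \<Rightarrow> bool" where
  "may_precede c m \<longleftrightarrow> fst m + mindiff c m \<le> fst c"

definition part_wt_u :: "cint \<Rightarrow> nat" where
  "part_wt_u c = (case snd c of Ca \<Rightarrow> 1 | Cab \<Rightarrow> 1 | Ca2 \<Rightarrow> 2 | _ \<Rightarrow> 0)"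

definition part_wt_v :: "cint \<Rightarrow> nat" where
  "part_wt_v c = (case snd c of Cb \<Rightarrow> 1 | Cab \<Rightarrow> 1 | Cb2 \<Rightarrow> 2 | _ \<Rightarrow> 0)"

lemma admissible_iff: "admissible p \<longleftrightarrow> list_all allowed_part p \<and> successively may_precede p"
  by (auto simp: admissible_def successively_iff_nth allowed_part_def may_precede_def list_all_iff)

lemma admissible_Nil [simp]: "admissible []"
  by (simp add: admissible_iff)

lemma admissible_Cons:
  "admissible (c # p) \<longleftrightarrow> allowed_part c \<and> admissible p \<and> (p \<noteq> [] \<longrightarrow> may_precede c (hd p))"
  by (auto simp: admissible_iff successively_Cons)

lemma psize_Nil [simp]: "psize [] = 0" and wt_u_Nil [simp]: "wt_u [] = 0" and wt_v_Nil [simp]: "wt_v [] = 0"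
  by (simp_all add: psize_def wt_u_def wt_v_def)

lemma psize_Cons [simp]: "psize (c # p) = fst c + psize p"
  and wt_u_Cons [simp]: "wt_u (c # p) = part_wt_u c + wt_u p"
  and wt_v_Cons [simp]: "wt_v (c # p) = part_wt_v c + wt_v p"
  by (simp_all add: psize_def wt_u_def wt_v_def part_wt_u_def part_wt_v_def)

lemma allowed_part_pos: "allowed_part c \<Longrightarrow> fst c \<ge> 1"
  by (auto simp: allowed_part_def valid_cint_def split: prod.splits colour.splits)

lemma finite_admissible_psize: "finite {p. admissible p \<and> psize p = n}"
proof (rule finite_subset)
  show "{p. admissible p \<and> psize p = n} \<subseteq> {p. set p \<subseteq> {..n} \<times> UNIV \<and> length p \<le> n}"
  proof clarify
    fix p assume "admissible p"
    then have "\<forall>c\<in>set p. 1 \<le> fst c"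
      by (induction p) (auto simp: admissible_Cons dest: allowed_part_pos)
    then have "length p \<le> psize p"
      by (induction p) auto
    moreover have "set p \<subseteq> {..psize p} \<times> UNIV"
      by (induction p) auto
    ultimately show "set p \<subseteq> {..psize p} \<times> UNIV \<and> length p \<le> psize p"
      by simp
  qed
  have "finite (UNIV :: colour set)"
    by (rule finite_subset[of _ "{Ca, Cb, Cab, Ca2, Cb2}"]) (use colour.exhaust in auto)
  then show "finite {p. set p \<subseteq> {..n} \<times> (UNIV :: colour set) \<and> length p \<le> n}"
    by (intro finite_lists_length_le) (simp add: finite_cartesian_product)
qed

lemma allowed_part_simps [simp]:
  "allowed_part (k, Ca) \<longleftrightarrow> 1 \<le> k"
  "allowed_part (k, Cb) \<longleftrightarrow> 1 \<le> k"
  "allowed_part (k, Cab) \<longleftrightarrow> 2 \<le> k"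
  "allowed_part (k, Ca2) \<longleftrightarrow> 3 \<le> k \<and> odd k"
  "allowed_part (k, Cb2) \<longleftrightarrow> 3 \<le> k \<and> odd k"
  by (auto simp: allowed_part_def valid_cint_def elim: oddE)

lemma ckey_simps [simp]:
  "ckey (k, Ca) = 4*k + 1" "ckey (k, Cb) = 4*k + 3" "ckey (k, Cab) = 4*k"
  "ckey (k, Ca2) = 4*k - 2" "ckey (k, Cb2) = 4*k + 2"
  by (simp_all add: ckey_def)

lemma ckey_inj: "allowed_part c \<Longrightarrow> allowed_part d \<Longrightarrow> ckey c = ckey d \<Longrightarrow> c = d"
  by (cases c; cases d)
    (auto simp: allowed_part_def valid_cint_def ckey_def split: colour.splits elim!: oddE; presburger)

section \<open>Series in \<open>a, b, q\<close>\<close>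

text \<open>A series in \<open>a, b, q\<close> is given by its coefficients \<open>(u, v, n) \<mapsto> [a^u b^v q^n]\<close>, taken in
  \<open>int\<close> so that the recurrences below can be solved for differences.\<close>
type_synonym series = "nat \<Rightarrow> nat \<Rightarrow> nat \<Rightarrow> int"

definition shift :: "nat \<Rightarrow> nat \<Rightarrow> nat \<Rightarrow> series \<Rightarrow> series" where
  "shift i j k F u v n = (if i \<le> u \<and> j \<le> v \<and> k \<le> n then F (u - i) (v - j) (n - k) else 0)"

definition unit_series :: series where
  "unit_series u v n = (if u = 0 \<and> v = 0 \<and> n = 0 then 1 else 0)"

definition zsubst_b_aq :: "series \<Rightarrow> series" where
  "zsubst_b_aq F u v n = (if u \<le> n then F v u (n - u) else 0)"

definition ztimes_1_aq :: "series \<Rightarrow> series" where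
  "ztimes_1_aq F = F + shift 1 0 1 F"

lemma shift_add: "shift i j k (F + G) = shift i j k F + shift i j k G"
  by (simp add: shift_def fun_eq_iff)

lemma shift_diff: "shift i j k (F - G) = shift i j k F - shift i j k G"
  by (simp add: shift_def fun_eq_iff)

lemma shift_shift: "shift i j k (shift i' j' k' F) = shift (i + i') (j + j') (k + k') F"
  by (auto simp: shift_def fun_eq_iff diff_diff_add add.commute)

lemma zsubst_b_aq_add: "zsubst_b_aq (F + G) = zsubst_b_aq F + zsubst_b_aq G"
  by (simp add: zsubst_b_aq_def fun_eq_iff)

lemma zsubst_b_aq_diff: "zsubst_b_aq (F - G) = zsubst_b_aq F - zsubst_b_aq G"
  by (simp add: zsubst_b_aq_def fun_eq_iff)

lemma zsubst_b_aq_shift: "zsubst_b_aq (shift i j k F) = shift j i (k + j) (zsubst_b_aq F)"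
  by (auto simp: shift_def zsubst_b_aq_def fun_eq_iff algebra_simps)

lemma zsubst_b_aq_unit: "zsubst_b_aq unit_series = unit_series"
  by (auto simp: zsubst_b_aq_def unit_series_def fun_eq_iff)

lemmas series_simps = shift_add shift_diff shift_shift zsubst_b_aq_add zsubst_b_aq_diff
  zsubst_b_aq_shift ztimes_1_aq_def

definition partitions_headed_in :: "cint set \<Rightarrow> nat \<Rightarrow> nat \<Rightarrow> nat \<Rightarrow> cint list set" where
  "partitions_headed_in S u v n = {p. admissible p \<and> (p \<noteq> [] \<longrightarrow> hd p \<in> S)
      \<and> psize p = n \<and> wt_u p = u \<and> wt_v p = v}"

definition series_headed_in :: "cint set \<Rightarrow> series" where
  "series_headed_in S u v n = int (card (partitions_headed_in S u v n))"

lemma finite_partitions_headed_in: "finite (partitions_headed_in S u v n)"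
  by (rule finite_subset[OF _ finite_admissible_psize[of n]]) (auto simp: partitions_headed_in_def)

lemma series_headed_in_cong:
  assumes "S \<inter> Collect allowed_part = S' \<inter> Collect allowed_part"
  shows "series_headed_in S = series_headed_in S'"
proof -
  have "admissible p \<Longrightarrow> p \<noteq> [] \<Longrightarrow> allowed_part (hd p)" for p
    by (cases p) (auto simp: admissible_Cons)
  then have "partitions_headed_in S u v n = partitions_headed_in S' u v n" for u v n
    using assms unfolding partitions_headed_in_def by blast
  then show ?thesis
    by (simp add: series_headed_in_def fun_eq_iff)
qed

lemma partitions_headed_by:
  assumes "allowed_part c"
  shows "{p \<in> partitions_headed_in {c} u v n. p \<noteq> []} =
    (if part_wt_u c \<le> u \<and> part_wt_v c \<le> v \<and> fst c \<le> n
     then (#) c ` partitions_headed_in {m. may_precede c m} (u - part_wt_u c) (v - part_wt_v c) (n - fst c)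
     else {})"
  using assms by (auto simp: partitions_headed_in_def admissible_Cons neq_Nil_conv)

lemma series_headed_in_insert:
  assumes "allowed_part c" and "c \<notin> S"
  shows "series_headed_in (insert c S) =
    series_headed_in S + shift (part_wt_u c) (part_wt_v c) (fst c) (series_headed_in {m. may_precede c m})"
proof -
  have "partitions_headed_in (insert c S) u v n =
      partitions_headed_in S u v n \<union> {p \<in> partitions_headed_in {c} u v n. p \<noteq> []}"
    and "partitions_headed_in S u v n \<inter> {p \<in> partitions_headed_in {c} u v n. p \<noteq> []} = {}" for u v n
    using \<open>c \<notin> S\<close> by (auto simp: partitions_headed_in_def)
  then show ?thesis
    using \<open>allowed_part c\<close>
    by (simp add: fun_eq_iff series_headed_in_def shift_def card_Un_disjoint finite_partitions_headed_in
        partitions_headed_by card_image)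
qed

section \<open>Recurrences in the position of the first part\<close>

definition G_upto :: "nat \<Rightarrow> series" where
  "G_upto t = series_headed_in {c. ckey c \<le> t}"

lemma int_Gcoeff: "(\<lambda>u v n. int (Gcoeff K u v n)) = G_upto (ckey K)"
  by (simp add: fun_eq_iff Gcoeff_def G_upto_def series_headed_in_def partitions_headed_in_def cle_def)

text \<open>The position \<open>t\<close> is not written as \<open>Suc s\<close> so that instances can be stated with
  numerals such as \<open>8*j+8\<close>.\<close>
lemma G_upto_Suc:
  assumes "allowed_part c" and "ckey c = t" and "t = Suc s"
    and "\<And>m. allowed_part m \<Longrightarrow> may_precede c m \<longleftrightarrow> m \<in> S"
  shows "G_upto t = G_upto s + shift (part_wt_u c) (part_wt_v c) (fst c) (series_headed_in S)"
proof -
  have "{d. ckey d \<le> t} \<inter> Collect allowed_part = insert c {d. ckey d \<le> s} \<inter> Collect allowed_part"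
    using assms(1-3) by (auto simp: le_Suc_eq dest: ckey_inj[of c])
  then have "G_upto t = series_headed_in (insert c {d. ckey d \<le> s})"
    unfolding G_upto_def by (rule series_headed_in_cong)
  also have "series_headed_in {m. may_precede c m} = series_headed_in S"
    using assms(4) by (intro series_headed_in_cong) auto
  ultimately show ?thesis
    using assms(1-3) by (simp add: series_headed_in_insert G_upto_def del: ckey_simps)
qed

lemma G_upto_Suc_unattained:
  assumes "\<And>c. allowed_part c \<Longrightarrow> ckey c \<noteq> Suc t"
  shows "G_upto (Suc t) = G_upto t"
  unfolding G_upto_def using assms by (intro series_headed_in_cong) (auto simp: le_Suc_eq)

lemma series_headed_in_empty: "series_headed_in {} = unit_series"
proof -
  have "partitions_headed_in {} u v n = (if u = 0 \<and> v = 0 \<and> n = 0 then {[]} else {})" for u v n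
    by (auto simp: partitions_headed_in_def)
  then show ?thesis
    by (simp add: series_headed_in_def unit_series_def fun_eq_iff)
qed

lemma G_upto_le_4: "t \<le> 4 \<Longrightarrow> G_upto t = unit_series"
  unfolding G_upto_def series_headed_in_empty[symmetric]
  by (rule series_headed_in_cong)
    (auto simp: allowed_part_def valid_cint_def ckey_def split: prod.splits colour.splits)

lemma G_upto_6: "G_upto 6 = G_upto 5"
proof (rule G_upto_Suc_unattained[of 5, simplified])
  fix c assume "allowed_part c"
  then show "ckey c \<noteq> 6"
    by (cases c) (auto simp: ckey_def split: colour.splits elim: oddE; presburger)
qed

lemma not_may_precede_one: "allowed_part m \<Longrightarrow> \<not> may_precede (1, x) m"
  by (cases m) (auto simp: may_precede_def mindiff_def allowed_part_def valid_cint_def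
      split: colour.splits)

lemma may_precede_even_ab_a_a2:
  assumes "allowed_part m" and "c \<in> {(2*j+2, Cab), (2*j+2, Ca), (2*j+3, Ca2)}"
  shows "may_precede c m \<longleftrightarrow> m \<in> insert (2*j, Cb) {d. ckey d \<le> 8*j+1}"
  using assms by (cases m) (auto simp: may_precede_def mindiff_def ckey_def allowed_part_def valid_cint_def
      split: colour.splits; presburger)

lemma may_precede_even_b_odd_ab_b2:
  assumes "allowed_part m" and "c \<in> {(2*j+2, Cb), (2*j+3, Cab), (2*j+3, Cb2)}"
  shows "may_precede c m \<longleftrightarrow> ckey m \<le> 8*j+5"
  using assms by (cases m) (auto simp: may_precede_def mindiff_def ckey_def allowed_part_def valid_cint_def
      split: colour.splits; presburger)

lemma may_precede_odd_a: "allowed_part m \<Longrightarrow> may_precede (2*j+3, Ca) m \<longleftrightarrow> ckey m \<le> 8*j+8"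
  by (cases m) (auto simp: may_precede_def mindiff_def ckey_def allowed_part_def valid_cint_def
      split: colour.splits; presburger)

lemma may_precede_odd_b: "allowed_part m \<Longrightarrow> may_precede (2*j+3, Cb) m \<longleftrightarrow> ckey m \<le> 8*j+9"
  by (cases m) (auto simp: may_precede_def mindiff_def ckey_def allowed_part_def valid_cint_def
      split: colour.splits; presburger)

text \<open>Key \<open>8j+2\<close> is the part \<open>(2j+1)_{a^2}\<close> and key \<open>8j+3\<close> the part \<open>(2j)_b\<close>,
  so this counts the partitions with first part at most \<open>(2j)_b\<close> but different from \<open>(2j+1)_{a^2}\<close>.\<close>
definition G_skip_a2 :: "nat \<Rightarrow> series" where
  "G_skip_a2 j = series_headed_in (insert (2*j, Cb) {c. ckey c \<le> 8*j+1})"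

lemma G_upto_even_ab: "G_upto (8*j+8) = G_upto (8*j+7) + shift 1 1 (2*j+2) (G_skip_a2 j)"
  using G_upto_Suc[of "(2*j+2, Cab)" "8*j+8" "8*j+7" "insert (2*j, Cb) {d. ckey d \<le> 8*j+1}"]
    may_precede_even_ab_a_a2
  by (simp add: G_skip_a2_def part_wt_u_def part_wt_v_def)

lemma G_upto_even_a: "G_upto (8*j+9) = G_upto (8*j+8) + shift 1 0 (2*j+2) (G_skip_a2 j)"
  using G_upto_Suc[of "(2*j+2, Ca)" "8*j+9" "8*j+8" "insert (2*j, Cb) {d. ckey d \<le> 8*j+1}"]
    may_precede_even_ab_a_a2
  by (simp add: G_skip_a2_def part_wt_u_def part_wt_v_def)

lemma G_upto_a2: "G_upto (8*j+10) = G_upto (8*j+9) + shift 2 0 (2*j+3) (G_skip_a2 j)"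
  using G_upto_Suc[of "(2*j+3, Ca2)" "8*j+10" "8*j+9" "insert (2*j, Cb) {d. ckey d \<le> 8*j+1}"]
    may_precede_even_ab_a_a2
  by (simp add: G_skip_a2_def part_wt_u_def part_wt_v_def)

lemma G_upto_even_b: "G_upto (8*j+11) = G_upto (8*j+10) + shift 0 1 (2*j+2) (G_upto (8*j+5))"
  using G_upto_Suc[of "(2*j+2, Cb)" "8*j+11" "8*j+10" "{d. ckey d \<le> 8*j+5}"]
    may_precede_even_b_odd_ab_b2
  by (simp add: G_upto_def part_wt_u_def part_wt_v_def)

lemma G_upto_odd_ab: "G_upto (8*j+12) = G_upto (8*j+11) + shift 1 1 (2*j+3) (G_upto (8*j+5))"
  using G_upto_Suc[of "(2*j+3, Cab)" "8*j+12" "8*j+11" "{d. ckey d \<le> 8*j+5}"]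
    may_precede_even_b_odd_ab_b2
  by (simp add: G_upto_def part_wt_u_def part_wt_v_def)

lemma G_upto_odd_a: "G_upto (8*j+13) = G_upto (8*j+12) + shift 1 0 (2*j+3) (G_upto (8*j+8))"
  using G_upto_Suc[of "(2*j+3, Ca)" "8*j+13" "8*j+12" "{d. ckey d \<le> 8*j+8}"]
    may_precede_odd_a
  by (simp add: G_upto_def part_wt_u_def part_wt_v_def)

lemma G_upto_b2: "G_upto (8*j+14) = G_upto (8*j+13) + shift 0 2 (2*j+3) (G_upto (8*j+5))"
  using G_upto_Suc[of "(2*j+3, Cb2)" "8*j+14" "8*j+13" "{d. ckey d \<le> 8*j+5}"]
    may_precede_even_b_odd_ab_b2
  by (simp add: G_upto_def part_wt_u_def part_wt_v_def)

lemma G_upto_odd_b: "G_upto (8*j+15) = G_upto (8*j+14) + shift 0 1 (2*j+3) (G_upto (8*j+9))"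
  using G_upto_Suc[of "(2*j+3, Cb)" "8*j+15" "8*j+14" "{d. ckey d \<le> 8*j+9}"]
    may_precede_odd_b
  by (simp add: G_upto_def part_wt_u_def part_wt_v_def)

lemma G_upto_5: "G_upto 5 = unit_series + shift 1 0 1 unit_series"
proof -
  have "G_upto 5 = G_upto 4 + shift (part_wt_u (1, Ca)) (part_wt_v (1, Ca)) (fst (1, Ca)) (series_headed_in {})"
    by (rule G_upto_Suc) (auto dest: not_may_precede_one)
  then show ?thesis
    by (simp add: G_upto_le_4 series_headed_in_empty part_wt_u_def part_wt_v_def)
qed

lemma G_upto_7: "G_upto 7 = G_upto 6 + shift 0 1 1 unit_series"
proof -
  have "G_upto 7 = G_upto 6 + shift (part_wt_u (1, Cb)) (part_wt_v (1, Cb)) (fst (1, Cb)) (series_headed_in {})"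
    by (rule G_upto_Suc) (auto dest: not_may_precede_one)
  then show ?thesis
    by (simp add: series_headed_in_empty part_wt_u_def part_wt_v_def)
qed

lemma G_skip_a2_0: "G_skip_a2 0 = unit_series"
proof -
  have "G_skip_a2 0 = G_upto 1"
    unfolding G_skip_a2_def G_upto_def by (rule series_headed_in_cong) (auto simp: allowed_part_def valid_cint_def)
  then show ?thesis
    by (simp add: G_upto_le_4)
qed

lemma G_skip_a2_Suc: "G_skip_a2 (Suc j) = G_upto (8*j+9) + shift 0 1 (2*j+2) (G_upto (8*j+5))"
proof -
  have "G_skip_a2 (Suc j) = series_headed_in (insert (2*j+2, Cb) {c. ckey c \<le> 8*j+9})"
    by (simp add: G_skip_a2_def add.commute)
  also have "\<dots> = G_upto (8*j+9) + shift 0 1 (2*j+2) (series_headed_in {m. may_precede (2*j+2, Cb) m})"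
    by (subst series_headed_in_insert) (simp_all add: G_upto_def part_wt_u_def part_wt_v_def)
  also have "series_headed_in {m. may_precede (2*j+2, Cb) m} = G_upto (8*j+5)"
    unfolding G_upto_def by (rule series_headed_in_cong) (auto simp: may_precede_even_b_odd_ab_b2)
  finally show ?thesis .
qed

section \<open>Propagating the identities\<close>

text \<open>Positions \<open>8j+5, 8j+7, 8j+8, 8j+9\<close> are the parts \<open>(2j+1)_a, (2j+1)_b, (2j+2)_{ab}, (2j+2)_a\<close>;
  the second conjunct is the third identity of the theorem for \<open>k = j\<close>.\<close>
definition invariant_identities :: "nat \<Rightarrow> bool" where
  "invariant_identities j \<longleftrightarrow>
     G_upto (8*j+5) = ztimes_1_aq (zsubst_b_aq (G_skip_a2 j)) \<and>
     G_upto (8*j+8) = ztimes_1_aq (zsubst_b_aq (G_upto (8*j+5))) \<and>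
     G_upto (8*j+9) = shift 1 0 1 (zsubst_b_aq (G_upto (8*j+5))) + zsubst_b_aq (G_upto (8*j+7))"

lemma invariant_identities_0: "invariant_identities 0"
  using G_upto_5 G_upto_7 G_upto_6 G_upto_even_ab[of 0] G_upto_even_a[of 0]
  by (simp add: invariant_identities_def G_skip_a2_0 series_simps zsubst_b_aq_unit algebra_simps)

lemma zsubst_b_aq_G_upto_8j9:
  assumes "invariant_identities j"
  shows "zsubst_b_aq (G_upto (8*j+9)) = zsubst_b_aq (G_upto (8*j+7)) + shift 0 1 (2*j+2) (G_upto (8*j+5))"
proof -
  from assms have "G_upto (8*j+5) = ztimes_1_aq (zsubst_b_aq (G_skip_a2 j))"
    by (simp add: invariant_identities_def)
  then show ?thesis
    unfolding G_upto_even_a G_upto_even_ab by (simp add: series_simps algebra_simps)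
qed

lemma identities_from_invariant:
  assumes "invariant_identities j"
  shows "G_upto (8*j+10) = ztimes_1_aq (zsubst_b_aq (G_upto (8*j+7)))"
    and "G_upto (8*j+12) = ztimes_1_aq (zsubst_b_aq (G_upto (8*j+9)))"
    and "G_upto (8*j+14) = ztimes_1_aq (zsubst_b_aq (G_upto (8*j+11)))"
    and "G_upto (8*j+16) = ztimes_1_aq (zsubst_b_aq (G_upto (8*j+13)))"
proof -
  note ops = series_simps algebra_simps
  \<comment> \<open>without this, numerals in shift exponents are rewritten into \<open>Suc\<close> terms that no longer match\<close>
  note [simp del] = add_2_eq_Suc add_2_eq_Suc' One_nat_def
  from assms have G5: "G_upto (8*j+5) = ztimes_1_aq (zsubst_b_aq (G_skip_a2 j))"
    and G8: "G_upto (8*j+8) = ztimes_1_aq (zsubst_b_aq (G_upto (8*j+5)))"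
    and G9: "G_upto (8*j+9) = shift 1 0 1 (zsubst_b_aq (G_upto (8*j+5))) + zsubst_b_aq (G_upto (8*j+7))"
    unfolding invariant_identities_def by blast+
  have skip_shift: "shift 1 0 (2*j+2) (G_skip_a2 j) = G_upto (8*j+9) - G_upto (8*j+8)"
    unfolding G_upto_even_a by simp
  have "G_upto (8*j+10) = G_upto (8*j+9) + shift 1 0 1 (shift 1 0 (2*j+2) (G_skip_a2 j))"
    unfolding G_upto_a2 by (simp add: ops)
  also have "\<dots> = ztimes_1_aq (zsubst_b_aq (G_upto (8*j+7)))"
    unfolding skip_shift G8 G9 by (simp add: ops)
  finally show G10: "G_upto (8*j+10) = ztimes_1_aq (zsubst_b_aq (G_upto (8*j+7)))" .
  show G12: "G_upto (8*j+12) = ztimes_1_aq (zsubst_b_aq (G_upto (8*j+9)))"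
    unfolding G_upto_odd_ab G_upto_even_b G10 zsubst_b_aq_G_upto_8j9[OF assms] by (simp add: ops)
  show G14: "G_upto (8*j+14) = ztimes_1_aq (zsubst_b_aq (G_upto (8*j+11)))"
    unfolding G_upto_b2 G_upto_odd_a G12 G_upto_even_b G_upto_a2 G8 G5 by (simp add: ops)
  have G16_rec: "G_upto (8*j+16) = G_upto (8*j+15) + shift 1 1 (2*j+4) (G_skip_a2 (Suc j))"
    using G_upto_even_ab[of "Suc j"] by (simp add: algebra_simps)
  have H8: "zsubst_b_aq (G_upto (8*j+8)) =
      zsubst_b_aq (G_upto (8*j+7)) + shift 1 1 (2*j+3) (zsubst_b_aq (G_skip_a2 j))"
    unfolding G_upto_even_ab by (simp add: ops)
  have H13: "zsubst_b_aq (G_upto (8*j+13)) = zsubst_b_aq (G_upto (8*j+11))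
      + shift 1 1 (2*j+4) (zsubst_b_aq (G_upto (8*j+5))) + shift 0 1 (2*j+3) (zsubst_b_aq (G_upto (8*j+8)))"
    unfolding G_upto_odd_a G_upto_odd_ab by (simp add: ops)
  show "G_upto (8*j+16) = ztimes_1_aq (zsubst_b_aq (G_upto (8*j+13)))"
    unfolding G16_rec G_upto_odd_b G14 G_skip_a2_Suc H13 H8 G9 G5 by (simp add: ops)
qed

lemma invariant_identities_Suc:
  assumes "invariant_identities j"
  shows "invariant_identities (Suc j)"
proof -
  note ops = series_simps algebra_simps
  note [simp del] = add_2_eq_Suc add_2_eq_Suc' One_nat_def
  from assms have G8: "G_upto (8*j+8) = ztimes_1_aq (zsubst_b_aq (G_upto (8*j+5)))"
    and G9: "G_upto (8*j+9) = shift 1 0 1 (zsubst_b_aq (G_upto (8*j+5))) + zsubst_b_aq (G_upto (8*j+7))"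
    unfolding invariant_identities_def by blast+
  note G12 = identities_from_invariant(2)[OF assms]
  note G16 = identities_from_invariant(4)[OF assms]
  have G13: "G_upto (8*j+13) = ztimes_1_aq (zsubst_b_aq (G_skip_a2 (Suc j)))"
    unfolding G_upto_odd_a G12 G8 G_skip_a2_Suc by (simp add: ops)
  have G17_rec: "G_upto (8*j+17) = G_upto (8*j+16) + shift 1 0 (2*j+4) (G_skip_a2 (Suc j))"
    using G_upto_even_a[of "Suc j"] by (simp add: algebra_simps)
  have H15: "zsubst_b_aq (G_upto (8*j+15)) = zsubst_b_aq (G_upto (8*j+13))
      + shift 2 0 (2*j+5) (zsubst_b_aq (G_upto (8*j+5))) + shift 1 0 (2*j+4) (zsubst_b_aq (G_upto (8*j+9)))"
    unfolding G_upto_odd_b G_upto_b2 by (simp add: ops)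
  have G17: "G_upto (8*j+17) = shift 1 0 1 (zsubst_b_aq (G_upto (8*j+13))) + zsubst_b_aq (G_upto (8*j+15))"
    unfolding G17_rec G16 H15 zsubst_b_aq_G_upto_8j9[OF assms] G_skip_a2_Suc unfolding G9
    by (simp add: ops)
  have index_Suc: "8 * Suc j + 5 = 8*j+13" "8 * Suc j + 7 = 8*j+15" "8 * Suc j + 8 = 8*j+16"
    "8 * Suc j + 9 = 8*j+17"
    by simp_all
  show ?thesis
    unfolding invariant_identities_def index_Suc using G13 G16 G17 by blast
qed

lemma invariant_identities_holds: "invariant_identities j"
  by (induction j) (simp_all add: invariant_identities_0 invariant_identities_Suc)

lemma Gcoeff_eq_times_1_aq_subst_b_aq:
  assumes "G_upto (ckey K) = ztimes_1_aq (zsubst_b_aq (G_upto (ckey L)))"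
  shows "Gcoeff K = times_1_aq (subst_b_aq (Gcoeff L))"
proof (intro ext)
  fix u v n
  have "int (Gcoeff K u v n) = ztimes_1_aq (zsubst_b_aq (\<lambda>u v n. int (Gcoeff L u v n))) u v n"
    using assms by (simp add: int_Gcoeff[symmetric] fun_eq_iff)
  also have "\<dots> = int (times_1_aq (subst_b_aq (Gcoeff L)) u v n)"
    by (auto simp: ztimes_1_aq_def zsubst_b_aq_def times_1_aq_def subst_b_aq_def shift_def)
  finally show "Gcoeff K u v n = times_1_aq (subst_b_aq (Gcoeff L)) u v n"
    by simp
qed

theorem proposition2p1:
  fixes k :: nat
  assumes "k \<ge> 1"
  shows "Gcoeff (2*k+1, Cab) = times_1_aq (subst_b_aq (Gcoeff (2*k, Ca))) \<and>
    Gcoeff (2*k+1, Cb2) = times_1_aq (subst_b_aq (Gcoeff (2*k, Cb))) \<and>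
    Gcoeff (2*k+2, Cab) = times_1_aq (subst_b_aq (Gcoeff (2*k+1, Ca))) \<and>
    Gcoeff (2*k+1, Ca2) = times_1_aq (subst_b_aq (Gcoeff (2*k-1, Cb)))"
proof -
  obtain j where k: "k = Suc j"
    using assms by (cases k) auto
  have keys: "ckey (2*k+1, Cab) = 8*j+12" "ckey (2*k, Ca) = 8*j+9"
    "ckey (2*k+1, Cb2) = 8*j+14" "ckey (2*k, Cb) = 8*j+11"
    "ckey (2*k+2, Cab) = 8*j+16" "ckey (2*k+1, Ca) = 8*j+13"
    "ckey (2*k+1, Ca2) = 8*j+10" "ckey (2*k-1, Cb) = 8*j+7"
    by (simp_all add: k)
  show ?thesis
    using identities_from_invariant[OF invariant_identities_holds]
    by (intro conjI Gcoeff_eq_times_1_aq_subst_b_aq) (simp_all only: keys)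
qed

end
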